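(* Let $(H,\langle\cdot,\cdot\rangle)$ be a real Hilbert space, regarded as an SSD space with bilinear form $\langle\cdot,\cdot\rangle$, so that $q(x)=\frac12\|x\|^2$. A nonempty set $A\subset H$ is $q$-representable if and only if $A$ is closed.
   Context: Every nonempty subset of $H$ is $q$-positive here since $q\ge0$. A nonempty set $A\subset H$ is $q$-representable if there exists a weakly lower semicontinuous (equivalently, since convex, norm lower semicontinuous) proper convex function $f:H\to\mathbb{R}\cup\{+\infty\}$ with $f\ge q$ on $H$ and $\{x: f(x)=q(x)\}=A$. *)

theory Defs
  imports "HOL-Analysis.Analysis"
begin

definition qH :: "'a::real_inner \<Rightarrow> real" where
  "qH x = (x \<bullet> x) / 2"

text \<open>Functions H -> R \<union> {+\<infinity>}, modelled as ereal-valued functions never equal to -\<infinity>.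
  Proper: never -\<infinity> and not identically +\<infinity>.\<close>
definition proper_fun :: "('a \<Rightarrow> ereal) \<Rightarrow> bool" where
  "proper_fun f \<longleftrightarrow> (\<forall>x. f x \<noteq> -\<infinity>) \<and> (\<exists>x. f x \<noteq> \<infinity>)"

text \<open>Convexity for extended-real-valued functions (with the convention 0 * \<infinity> = 0).\<close>
definition ereal_convex :: "('a::real_vector \<Rightarrow> ereal) \<Rightarrow> bool" where
  "ereal_convex f \<longleftrightarrow> (\<forall>x y t. 0 \<le> t \<and> t \<le> 1 \<longrightarrow>
      f ((1 - t) *\<^sub>R x + t *\<^sub>R y) \<le> ereal (1 - t) * f x + ereal t * f y)"

definition lsc_fun :: "('a::topological_space \<Rightarrow> ereal) \<Rightarrow> bool" where
  "lsc_fun f \<longleftrightarrow> (\<forall>c::real. closed {x. f x \<le> ereal c})"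

definition q_representable :: "'a::real_inner set \<Rightarrow> bool" where
  "q_representable A \<longleftrightarrow> (\<exists>f. proper_fun f \<and> ereal_convex f \<and> lsc_fun f \<and>
      (\<forall>x. ereal (qH x) \<le> f x) \<and> {x. f x = ereal (qH x)} = A)"

end

theory Submission
  imports Defs
begin

text \<open>
  If f is lsc and f \<ge> q, the contact set {f = q} = {f \<le> q} is closed since q is continuous.
  Conversely, for closed nonempty A take the lsc convex hull of q + \<iota>_A, i.e. the biconjugate
  f = (q + \<iota>_A)**, a supremum of continuous affine functions. The identity
  \<langle>x, a\<rangle> - q a = q x - |x - a|^2 / 2 gives (q + \<iota>_A)* x \<le> q x - d(x, A)^2 / 2, hence
  f x \<ge> \<langle>x, x\<rangle> - (q + \<iota>_A)* x \<ge> q x + d(x, A)^2 / 2, while f \<le> q on A.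
  So f \<ge> q, and f x = q x forces d(x, A) = 0, i.e. x \<in> A.
\<close>

lemma closed_lsc_le_continuous:
  fixes f :: "'a::topological_space \<Rightarrow> ereal"
  assumes lsc: "lsc_fun f" and g: "continuous_on UNIV g"
  shows "closed {x. f x \<le> ereal (g x)}"
proof -
  have "ereal (g x) < f x \<longleftrightarrow> (\<exists>c. g x < c \<and> ereal c < f x)" for x
    by (metis ereal_dense2 ereal_less(2) less_ereal.simps(1) order.strict_trans)
  then have "- {x. f x \<le> ereal (g x)} = (\<Union>c. {x. g x < c} \<inter> - {x. f x \<le> ereal c})"
    unfolding Compl_eq by (auto simp flip: not_le)
  moreover have "open (\<Union>c. {x. g x < c} \<inter> - {x. f x \<le> ereal c})"
    using lsc unfolding lsc_fun_def
    by (intro open_UN ballI open_Int open_Compl open_Collect_less[OF g continuous_on_const]) auto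
  ultimately show ?thesis by (simp add: closed_def)
qed

lemma lsc_fun_SUP_continuous:
  assumes "\<And>i. i \<in> I \<Longrightarrow> continuous_on UNIV (h i)"
  shows "lsc_fun (\<lambda>x. SUP i\<in>I. ereal (h i x))"
  unfolding lsc_fun_def
proof
  fix c :: real
  have "{x. (SUP i\<in>I. ereal (h i x)) \<le> ereal c} = (\<Inter>i\<in>I. {x. h i x \<le> c})"
    by (auto simp: SUP_le_iff)
  moreover have "closed (\<Inter>i\<in>I. {x. h i x \<le> c})"
    using assms by (intro closed_INT ballI closed_Collect_le continuous_on_const)
  ultimately show "closed {x. (SUP i\<in>I. ereal (h i x)) \<le> ereal c}" by simp
qed

lemma ereal_convex_SUP_convex:
  assumes "\<And>i. i \<in> I \<Longrightarrow> convex_on UNIV (h i)"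
  shows "ereal_convex (\<lambda>x. SUP i\<in>I. ereal (h i x))"
  unfolding ereal_convex_def
proof (intro allI impI)
  fix x y and t :: real assume t: "0 \<le> t \<and> t \<le> 1"
  let ?F = "\<lambda>x. SUP i\<in>I. ereal (h i x)"
  show "?F ((1 - t) *\<^sub>R x + t *\<^sub>R y) \<le> ereal (1 - t) * ?F x + ereal t * ?F y"
  proof (rule SUP_least)
    fix i assume i: "i \<in> I"
    have "ereal (h i ((1 - t) *\<^sub>R x + t *\<^sub>R y)) \<le> ereal ((1 - t) * h i x + t * h i y)"
      using convex_onD[OF assms[OF i]] t by simp
    also have "\<dots> = ereal (1 - t) * ereal (h i x) + ereal t * ereal (h i y)"
      by simp
    also have "\<dots> \<le> ereal (1 - t) * ?F x + ereal t * ?F y"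
      using t i by (intro add_mono ereal_mult_left_mono SUP_upper) auto
    finally show "ereal (h i ((1 - t) *\<^sub>R x + t *\<^sub>R y)) \<le> ereal (1 - t) * ?F x + ereal t * ?F y" .
  qed
qed

lemma convex_on_inner_minus_const: "convex_on UNIV (\<lambda>x. x \<bullet> y - c)"
  by (rule convex_onI) (simp_all add: inner_add_left algebra_simps)

lemma q_representable_closed:
  assumes "q_representable A"
  shows "closed A"
proof -
  obtain f where "lsc_fun f" and ge: "\<forall>x. ereal (qH x) \<le> f x" and eq: "{x. f x = ereal (qH x)} = A"
    using assms unfolding q_representable_def by blast
  have "continuous_on UNIV (qH :: 'a \<Rightarrow> real)"
    unfolding qH_def by (intro continuous_intros) simp
  with \<open>lsc_fun f\<close> have "closed {x. f x \<le> ereal (qH x)}"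
    by (rule closed_lsc_le_continuous)
  moreover have "{x. f x \<le> ereal (qH x)} = A"
    using ge eq by (auto intro: antisym)
  ultimately show ?thesis by simp
qed

lemma inner_minus_qH: "y \<bullet> a - qH a = qH y - (norm (y - a))\<^sup>2 / 2"
  unfolding qH_def power2_norm_eq_inner
  by (simp add: inner_diff_left inner_diff_right inner_commute field_simps)

definition conj_qH_on :: "'a::real_inner set \<Rightarrow> 'a \<Rightarrow> real" where
  "conj_qH_on A y = (SUP a\<in>A. y \<bullet> a - qH a)"

definition biconj_qH_on :: "'a::real_inner set \<Rightarrow> 'a \<Rightarrow> ereal" where
  "biconj_qH_on A x = (SUP y. ereal (x \<bullet> y - conj_qH_on A y))"

lemma conj_qH_on_ge:
  assumes "a \<in> A"
  shows "y \<bullet> a - qH a \<le> conj_qH_on A y"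
  unfolding conj_qH_on_def
proof (rule cSUP_upper[OF assms])
  show "bdd_above ((\<lambda>a. y \<bullet> a - qH a) ` A)"
    by (rule bdd_aboveI[of _ "qH y"]) (auto simp: inner_minus_qH)
qed

lemma conj_qH_on_le_infdist:
  assumes "A \<noteq> {}"
  shows "conj_qH_on A x \<le> qH x - (infdist x A)\<^sup>2 / 2"
  unfolding conj_qH_on_def
proof (rule cSUP_least[OF assms])
  fix a assume "a \<in> A"
  then have "(infdist x A)\<^sup>2 \<le> (norm (x - a))\<^sup>2"
    by (simp add: power_mono infdist_le infdist_nonneg flip: dist_norm)
  then show "x \<bullet> a - qH a \<le> qH x - (infdist x A)\<^sup>2 / 2"
    by (simp add: inner_minus_qH)
qed

lemma biconj_qH_on_ge_infdist:
  assumes "A \<noteq> {}"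
  shows "ereal (qH x + (infdist x A)\<^sup>2 / 2) \<le> biconj_qH_on A x"
proof -
  have "qH x + (infdist x A)\<^sup>2 / 2 \<le> x \<bullet> x - conj_qH_on A x"
    using conj_qH_on_le_infdist[OF assms, of x] by (simp add: qH_def)
  also have "ereal (x \<bullet> x - conj_qH_on A x) \<le> biconj_qH_on A x"
    unfolding biconj_qH_on_def by (rule SUP_upper) simp
  finally show ?thesis by simp
qed

lemma biconj_qH_on_le:
  assumes "a \<in> A"
  shows "biconj_qH_on A a \<le> ereal (qH a)"
  unfolding biconj_qH_on_def
proof (rule SUP_least)
  fix y
  show "ereal (a \<bullet> y - conj_qH_on A y) \<le> ereal (qH a)"
    using conj_qH_on_ge[OF assms, of y] by (simp add: inner_commute)
qed

lemma closed_q_representable: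
  assumes "A \<noteq> {}" and "closed A"
  shows "q_representable A"
proof -
  let ?f = "biconj_qH_on A"
  have ge: "ereal (qH x) \<le> ?f x" for x
    using biconj_qH_on_ge_infdist[OF assms(1), of x] by (rule order_trans[rotated]) simp
  have "{x. ?f x = ereal (qH x)} = A"
  proof (intro equalityI subsetI)
    fix x assume "x \<in> {x. ?f x = ereal (qH x)}"
    then have "(infdist x A)\<^sup>2 \<le> 0"
      using biconj_qH_on_ge_infdist[OF assms(1), of x] by simp
    then show "x \<in> A"
      using in_closed_iff_infdist_zero[OF assms(2,1)] by simp
  qed (auto intro: antisym ge biconj_qH_on_le)
  moreover have "proper_fun ?f"
    unfolding proper_fun_def
  proof
    show "\<forall>x. ?f x \<noteq> - \<infinity>"
      using ge by (metis MInfty_neq_ereal(1) ereal_infty_less_eq(2))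
    obtain a where "a \<in> A" using assms(1) by auto
    then show "\<exists>x. ?f x \<noteq> \<infinity>"
      using biconj_qH_on_le by (metis ereal_infty_less_eq(1) PInfty_neq_ereal(1))
  qed
  moreover have "lsc_fun ?f" "ereal_convex ?f"
    unfolding biconj_qH_on_def
    by (intro lsc_fun_SUP_continuous ereal_convex_SUP_convex
        convex_on_inner_minus_const continuous_intros)+
  ultimately show ?thesis
    unfolding q_representable_def using ge by blast
qed

theorem mainTheorem19:
  fixes A :: "'a::{real_inner, complete_space} set"
  assumes "A \<noteq> {}"
  shows "q_representable A \<longleftrightarrow> closed A"
  using q_representable_closed closed_q_representable assms by blast

end
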